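(* There exist regular (up to a charged thin shell) spherically symmetric, asymptotically flat, non-time-symmetric and non-maximal initial data satisfying the dominant energy condition, with a ball $\mathcal{B}$ of area radius $\mathcal{R}$ outside which the data are electrovacuum with charge $Q$ and mass $M>|Q|$, having a horizon outside $\mathcal{B}$ of area radius $r_+=M+\sqrt{M^2-Q^2}$, and such that $2\mathcal{R}<|Q|$. In particular, inequality $2\mathcal{R}>|Q|$ can fail for a ball lying inside a horizon.
   Context: Spherically symmetric data: metric $dl^2+r(l)^2(d\theta^2+\sin^2\theta d\phi^2)$, second fundamental form $K_{ij}=n_in_jK_l+(h_{ij}-n_in_j)K_r$, $n=\partial_l$, trace $K=K_l+2K_r$ (maximal means $K=0$; time-symmetric means $K_{ij}=0$). Null expansions $\theta^\pm=\frac2r(r'\pm K_rr)$; a horizon is the outer boundary of a trapped region ($\theta^+\theta^-<0$) and satisfies $\theta^+\theta^-=0$. Asymptotic flatness: $h_{ij}=\delta_{ij}+O(r^{-1})$, $K_{ij}=O(r^{-2})$ with the corresponding derivative falloffs. Electrovacuum: only matter is the electric field $E=Q/r^2$. *)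

theory Defs
  imports "HOL-Analysis.Analysis"
begin

text \<open>
Spherically symmetric initial data: metric dl^2 + r(l)^2 dOmega^2,
second fundamental form K = K_l n n + K_r (h - n n), radial electric field E n.
The data are regular up to a single thin shell at l = ls: each quantity is given
on [0,ls] by a smooth function (index 1) and on [ls,oo) by a smooth function
(index 2); the pieces of r agree at ls (continuous metric).  A data "piece"
is a quadruple (r, K_l, K_r, E) of real functions of l.
\<close>

definition smooth_fun :: "(real \<Rightarrow> real) \<Rightarrow> bool" where
  "smooth_fun f \<longleftrightarrow> (\<forall>k x. ((deriv ^^ k) f) differentiable (at x))"

type_synonym piece = "(real \<Rightarrow> real) \<times> (real \<Rightarrow> real) \<times> (real \<Rightarrow> real) \<times> (real \<Rightarrow> real)"

definition pr :: "piece \<Rightarrow> real \<Rightarrow> real" where "pr p = fst p"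
definition pKl :: "piece \<Rightarrow> real \<Rightarrow> real" where "pKl p = fst (snd p)"
definition pKr :: "piece \<Rightarrow> real \<Rightarrow> real" where "pKr p = fst (snd (snd p))"
definition pE :: "piece \<Rightarrow> real \<Rightarrow> real" where "pE p = snd (snd (snd p))"

text \<open>Matter energy density (excluding the electromagnetic energy) from the
Hamiltonian constraint  R + K^2 - |K|^2 = 16 pi mu + 2 E^2, where for these data
R = (2/r^2)(1 - r'^2 - 2 r r'') and K^2 - |K|^2 = 4 K_l K_r + 2 K_r^2.\<close>
definition mu :: "piece \<Rightarrow> real \<Rightarrow> real" where
  "mu p l = (1 / (16 * pi)) *
      ((2 / (pr p l)\<^sup>2) * (1 - (deriv (pr p) l)\<^sup>2 - 2 * pr p l * deriv (deriv (pr p)) l)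
       + 4 * pKl p l * pKr p l + 2 * (pKr p l)\<^sup>2)
    - (pE p l)\<^sup>2 / (8 * pi)"

text \<open>Radial matter momentum density from the momentum constraint
div(K - (tr K) h) = 8 pi J (the purely electric field carries no momentum).\<close>
definition Jmom :: "piece \<Rightarrow> real \<Rightarrow> real" where
  "Jmom p l = (1 / (8 * pi)) *
      (2 * (deriv (pr p) l / pr p l) * (pKl p l - pKr p l) - 2 * deriv (pKr p) l)"

definition theta_plus :: "piece \<Rightarrow> real \<Rightarrow> real" where
  "theta_plus p l = (2 / pr p l) * (deriv (pr p) l + pKr p l * pr p l)"
definition theta_minus :: "piece \<Rightarrow> real \<Rightarrow> real" where
  "theta_minus p l = (2 / pr p l) * (deriv (pr p) l - pKr p l * pr p l)"

definition glue :: "real \<Rightarrow> (piece \<Rightarrow> real \<Rightarrow> real) \<Rightarrow> piece \<Rightarrow> piece \<Rightarrow> real \<Rightarrow> real" where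
  "glue ls F p1 p2 l = (if l \<le> ls then F p1 l else F p2 l)"

definition theta_prod :: "real \<Rightarrow> piece \<Rightarrow> piece \<Rightarrow> real \<Rightarrow> real" where
  "theta_prod ls p1 p2 l =
     glue ls theta_plus p1 p2 l * glue ls theta_minus p1 p2 l"

text \<open>Misner--Sharp (Hawking) mass of the sphere at l; its limit at infinity is
the ADM mass of spherically symmetric asymptotically flat data.\<close>
definition ms_mass :: "piece \<Rightarrow> real \<Rightarrow> real" where
  "ms_mass p l = (pr p l / 2) * (1 - (deriv (pr p) l)\<^sup>2 + (pKr p l)\<^sup>2 * (pr p l)\<^sup>2)"

text \<open>Regularity up to a thin shell at ls > 0, including smoothness at the
centre l = 0 (r odd with r'(0) = 1, K_l and K_r even with K_l(0) = K_r(0),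
E odd), positivity of r away from the centre, and continuity of r at the shell.\<close>
definition regular_up_to_shell :: "real \<Rightarrow> piece \<Rightarrow> piece \<Rightarrow> bool" where
  "regular_up_to_shell ls p1 p2 \<longleftrightarrow>
     0 < ls \<and>
     smooth_fun (pr p1) \<and> smooth_fun (pKl p1) \<and> smooth_fun (pKr p1) \<and> smooth_fun (pE p1) \<and>
     smooth_fun (pr p2) \<and> smooth_fun (pKl p2) \<and> smooth_fun (pKr p2) \<and> smooth_fun (pE p2) \<and>
     (\<forall>l. pr p1 (- l) = - pr p1 l) \<and> deriv (pr p1) 0 = 1 \<and>
     (\<forall>l. pKl p1 (- l) = pKl p1 l) \<and> (\<forall>l. pKr p1 (- l) = pKr p1 l) \<and>
     pKl p1 0 = pKr p1 0 \<and> (\<forall>l. pE p1 (- l) = - pE p1 l) \<and>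
     (\<forall>l. 0 < l \<and> l \<le> ls \<longrightarrow> 0 < pr p1 l) \<and>
     (\<forall>l. ls \<le> l \<longrightarrow> 0 < pr p2 l) \<and>
     pr p1 ls = pr p2 ls"

text \<open>Dominant energy condition: mu \<ge> |J| for the smooth parts, and for the
shell the surface energy density sigma = -[r']/(4 pi r) dominates the surface
momentum density |j| = |[K_r]|/(4 pi), where [f] = f(ls+) - f(ls-).\<close>
definition dominant_energy :: "real \<Rightarrow> piece \<Rightarrow> piece \<Rightarrow> bool" where
  "dominant_energy ls p1 p2 \<longleftrightarrow>
     (\<forall>l. 0 < l \<and> l < ls \<longrightarrow> \<bar>Jmom p1 l\<bar> \<le> mu p1 l) \<and>
     (\<forall>l. ls < l \<longrightarrow> \<bar>Jmom p2 l\<bar> \<le> mu p2 l) \<and>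
     pr p2 ls * \<bar>pKr p2 ls - pKr p1 ls\<bar> \<le> - (deriv (pr p2) ls - deriv (pr p1) ls)"

text \<open>Asymptotic flatness in spherical symmetry: r \<rightarrow> oo, and in terms of the area
radius h - delta = O(1/r), K = O(1/r^2), with derivative falloffs
dh = O(1/r^2), dK = O(1/r^3).\<close>
definition asymptotically_flat :: "piece \<Rightarrow> bool" where
  "asymptotically_flat p \<longleftrightarrow>
     filterlim (pr p) at_top at_top \<and>
     (\<exists>C. eventually (\<lambda>l.
         \<bar>deriv (pr p) l - 1\<bar> \<le> C / pr p l \<and>
         \<bar>deriv (deriv (pr p)) l\<bar> \<le> C / (pr p l)\<^sup>2 \<and>
         \<bar>pKl p l\<bar> \<le> C / (pr p l)\<^sup>2 \<and> \<bar>pKr p l\<bar> \<le> C / (pr p l)\<^sup>2 \<and>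
         \<bar>deriv (pKl p) l\<bar> \<le> C / (pr p l)^3 \<and> \<bar>deriv (pKr p) l\<bar> \<le> C / (pr p l)^3) at_top)"

definition time_symmetric :: "real \<Rightarrow> piece \<Rightarrow> piece \<Rightarrow> bool" where
  "time_symmetric ls p1 p2 \<longleftrightarrow>
     (\<forall>l\<ge>0. glue ls pKl p1 p2 l = 0 \<and> glue ls pKr p1 p2 l = 0)"

definition maximal :: "real \<Rightarrow> piece \<Rightarrow> piece \<Rightarrow> bool" where
  "maximal ls p1 p2 \<longleftrightarrow>
     (\<forall>l\<ge>0. glue ls pKl p1 p2 l + 2 * glue ls pKr p1 p2 l = 0)"

definition horizon_at :: "real \<Rightarrow> piece \<Rightarrow> piece \<Rightarrow> real \<Rightarrow> bool" where
  "horizon_at ls p1 p2 lh \<longleftrightarrow>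
     theta_prod ls p1 p2 lh = 0 \<and>
     (\<exists>\<epsilon>>0. (\<forall>l. lh - \<epsilon> < l \<and> l < lh \<longrightarrow> theta_prod ls p1 p2 l < 0) \<and>
            (\<forall>l. lh < l \<and> l < lh + \<epsilon> \<longrightarrow> 0 \<le> theta_prod ls p1 p2 l))"

definition electrovac_outside :: "real \<Rightarrow> piece \<Rightarrow> piece \<Rightarrow> real \<Rightarrow> real \<Rightarrow> bool" where
  "electrovac_outside ls p1 p2 l0 Q \<longleftrightarrow>
     ls \<le> l0 \<and>
     (\<forall>l. l0 < l \<longrightarrow> mu p2 l = 0 \<and> Jmom p2 l = 0 \<and> pE p2 l = Q / (pr p2 l)\<^sup>2)"

end

theory Submission
  imports Defs "HOL-Real_Asymp.Real_Asymp" "HOL-Computational_Algebra.Polynomial"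
begin

(*
  Inside a charged thin shell of area radius R = 200/41 the data are flat; outside they are
  a non-time-symmetric slice of the Reissner-Nordstroem solution with M = 29/2 and Q = 10,
  whose outer horizon r = 25 lies outside the shell although 2R = 400/41 < Q.
  The exterior is parametrised by x = 1/r: r' and K_r are rational functions of x with
  r'^2 - K_r^2 r^2 = 1 - 2 M x + Q^2 x^2, so the Misner-Sharp mass is M - Q^2 x / 2; K_l is
  fixed by the momentum constraint, after which the Hamiltonian constraint holds with E = Q x^2
  and no matter.  The profile x(l) solves dx/dl = -x^2 r'(x) and is obtained by inverting l(x),
  which decreases from +oo to -oo on (0, 26/125) because r' has a simple zero at x = 26/125.
  At the shell r' drops from 1 to r'(41/200) by more than R times the jump of K_r, which is the
  dominant energy condition for the shell, and theta+ theta- = 4 x^2 (1 - 25 x)(1 - 4 x) changes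
  sign at x = 1/25.
*)

lemma DERIV_quotient_eq:
  assumes "(f has_real_derivative f') (at x)" "(g has_real_derivative g') (at x)" "g x \<noteq> 0"
    and "(f' * g x - f x * g') / (g x)\<^sup>2 = D"
  shows "((\<lambda>y. f y / g y) has_real_derivative D) (at x)"
  using DERIV_quotient[OF assms(1-3)] assms(4) by (simp add: power2_eq_square mult.commute)

lemma smooth_fun_poly: "smooth_fun (poly (p :: real poly))"
proof -
  have "\<exists>q. (deriv ^^ n) (poly p) = poly q" for n
  proof (induction n)
    case (Suc n)
    then obtain q where "(deriv ^^ n) (poly p) = poly q" by blast
    then show ?case
      using DERIV_imp_deriv[OF poly_DERIV] by (auto intro!: exI[of _ "pderiv q"])
  qed auto
  then show ?thesis
    unfolding smooth_fun_def real_differentiable_def by (metis poly_DERIV)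
qed

lemma poly_quotient_power_has_derivative:
  assumes "poly D x \<noteq> (0 :: real)"
  shows "((\<lambda>x. poly p x / poly D x ^ k) has_real_derivative
     (poly (pderiv p) x * poly D x - of_nat k * poly p x * poly (pderiv D) x) / poly D x ^ (k + 1)) (at x)"
proof (cases k)
  case (Suc m)
  have "((\<lambda>x. poly p x / poly D x ^ Suc m) has_real_derivative
     (poly (pderiv p) x * poly D x ^ Suc m - poly p x * (of_nat (Suc m) * poly (pderiv D) x * poly D x ^ m))
       / (poly D x ^ Suc m)\<^sup>2) (at x)"
    using DERIV_power[OF poly_DERIV[of D x], of "Suc m"] assms
    by (intro DERIV_quotient_eq poly_DERIV) (auto simp: algebra_simps)
  moreover have "(poly (pderiv p) x * poly D x ^ Suc m - poly p x * (of_nat (Suc m) * poly (pderiv D) x * poly D x ^ m))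
       / (poly D x ^ Suc m)\<^sup>2
     = (poly (pderiv p) x * poly D x - of_nat (Suc m) * poly p x * poly (pderiv D) x) / poly D x ^ (Suc m + 1)"
    using assms by (simp add: field_simps power2_eq_square power_add)
  ultimately show ?thesis
    using Suc by simp
qed (use assms in simp)

locale rational_flow =
  fixes u :: "real \<Rightarrow> real" and V D :: "real poly"
  assumes has_derivative: "\<And>l. (u has_real_derivative poly V (u l) / poly D (u l)) (at l)"
    and denominator_nonzero: "\<And>l. poly D (u l) \<noteq> 0"
begin

lemma rational_has_derivative:
  "((\<lambda>l. poly p (u l) / poly D (u l) ^ k) has_real_derivative
     poly ((pderiv p * D - smult (of_nat k) (p * pderiv D)) * V) (u l) / poly D (u l) ^ (k + 2)) (at l)"
proof -
  define d where "d = poly D (u l)"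
  define A where "A = poly (pderiv p) (u l) * d - of_nat k * poly p (u l) * poly (pderiv D) (u l)"
  have "((\<lambda>l. poly p (u l) / poly D (u l) ^ k) has_real_derivative
      A / d ^ (k + 1) * (poly V (u l) / d)) (at l)"
    unfolding A_def d_def
    by (rule DERIV_chain2[OF poly_quotient_power_has_derivative[OF denominator_nonzero] has_derivative])
  moreover have "A / d ^ (k + 1) * (poly V (u l) / d) = A * poly V (u l) / d ^ (k + 2)"
    by (simp add: times_divide_times_eq)
  ultimately show ?thesis
    unfolding A_def d_def by (simp add: algebra_simps)
qed

lemma deriv_rational:
  "deriv (\<lambda>l. poly p (u l) / poly D (u l) ^ k)
     = (\<lambda>l. poly ((pderiv p * D - smult (of_nat k) (p * pderiv D)) * V) (u l) / poly D (u l) ^ (k + 2))"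
  using DERIV_imp_deriv[OF rational_has_derivative] by blast

lemma smooth_fun_rational: "smooth_fun (\<lambda>l. poly p (u l) / poly D (u l) ^ k)"
proof -
  have "\<exists>p' k'. (deriv ^^ n) (\<lambda>l. poly p (u l) / poly D (u l) ^ k) = (\<lambda>l. poly p' (u l) / poly D (u l) ^ k')"
    for n
  proof (induction n)
    case (Suc n)
    then obtain p' k' where IH: "(deriv ^^ n) (\<lambda>l. poly p (u l) / poly D (u l) ^ k)
        = (\<lambda>l. poly p' (u l) / poly D (u l) ^ k')"
      by blast
    show ?case
      unfolding funpow.simps comp_def IH deriv_rational by blast
  qed auto
  then show ?thesis
    unfolding smooth_fun_def real_differentiable_def by (metis rational_has_derivative)
qed

end

locale decreasing_onto =
  fixes f f' :: "real \<Rightarrow> real" and a b :: real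
  assumes interval: "a < b"
    and has_derivative: "\<And>x. a < x \<Longrightarrow> x < b \<Longrightarrow> (f has_real_derivative f' x) (at x)"
    and derivative_neg: "\<And>x. a < x \<Longrightarrow> x < b \<Longrightarrow> f' x < 0"
    and tendsto_at_top: "filterlim f at_top (at_right a)"
    and tendsto_at_bot: "filterlim f at_bot (at_left b)"
begin

lemma isCont: "a < x \<Longrightarrow> x < b \<Longrightarrow> isCont f x"
  using DERIV_isCont has_derivative by blast

lemma strict_decreasing:
  assumes "a < x" "x < y" "y < b"
  shows "f y < f x"
proof (rule DERIV_neg_imp_decreasing_open[OF \<open>x < y\<close>])
  fix z assume "x < z" "z < y"
  with assms show "\<exists>D. DERIV f z :> D \<and> D < 0"
    by (intro exI[of _ "f' z"] conjI has_derivative derivative_neg) auto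
next
  show "continuous_on {x..y} f"
    using assms by (intro continuous_at_imp_continuous_on ballI isCont) auto
qed

lemma le_iff:
  assumes "a < x" "x < b" "a < y" "y < b"
  shows "f x \<le> f y \<longleftrightarrow> y \<le> x"
proof (cases x y rule: linorder_cases)
  case less
  then show ?thesis
    using strict_decreasing[of x y] assms by simp
next
  case greater
  then show ?thesis
    using strict_decreasing[of y x] assms by simp
qed simp

lemma eq_iff: "a < x \<Longrightarrow> x < b \<Longrightarrow> a < y \<Longrightarrow> y < b \<Longrightarrow> f x = f y \<longleftrightarrow> x = y"
  using le_iff[of x y] le_iff[of y x] by (simp add: order_eq_iff)

lemma surj: "\<exists>x. a < x \<and> x < b \<and> f x = l"
proof -
  have "eventually (\<lambda>x. a < x \<and> x < b) (at_right a)"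
    using interval by (auto simp: eventually_at_right_field)
  moreover have "eventually (\<lambda>x. l \<le> f x) (at_right a)"
    using tendsto_at_top by (simp add: filterlim_at_top)
  ultimately have "eventually (\<lambda>x. (a < x \<and> x < b) \<and> l \<le> f x) (at_right a)"
    by (rule eventually_conj)
  then obtain x where x: "a < x" "x < b" "l \<le> f x"
    using eventually_happens by force
  have "eventually (\<lambda>y. x < y \<and> y < b) (at_left b)"
    using x by (auto simp: eventually_at_left_field)
  moreover have "eventually (\<lambda>y. f y \<le> l) (at_left b)"
    using tendsto_at_bot by (simp add: filterlim_at_bot)
  ultimately have "eventually (\<lambda>y. (x < y \<and> y < b) \<and> f y \<le> l) (at_left b)"
    by (rule eventually_conj)
  then obtain y where y: "x < y" "y < b" "f y \<le> l"
    using eventually_happens by force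
  have "continuous_on {x..y} f"
    using x y by (intro continuous_at_imp_continuous_on ballI isCont) auto
  then obtain z where "x \<le> z" "z \<le> y" "f z = l"
    using IVT2'[of f y l x] x y by auto
  with x y show ?thesis
    by (intro exI[of _ z]) auto
qed

definition finv :: "real \<Rightarrow> real" where
  "finv l = (THE x. a < x \<and> x < b \<and> f x = l)"

lemma finv: "a < finv l" "finv l < b" "f (finv l) = l"
proof -
  obtain x where x: "a < x" "x < b" "f x = l"
    using surj by blast
  have "\<exists>!x. a < x \<and> x < b \<and> f x = l"
  proof (rule ex1I[of _ x])
    fix y assume "a < y \<and> y < b \<and> f y = l"
    then show "y = x"
      using eq_iff[of y x] x by simp
  qed (use x in simp)
  then have "a < finv l \<and> finv l < b \<and> f (finv l) = l"
    unfolding finv_def by (rule theI')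
  then show "a < finv l" "finv l < b" "f (finv l) = l"
    by simp_all
qed

lemma finv_f: "a < x \<Longrightarrow> x < b \<Longrightarrow> finv (f x) = x"
  using eq_iff[of "finv (f x)" x] finv[of "f x"] by simp

lemma finv_strict_decreasing: "l < l' \<Longrightarrow> finv l' < finv l"
  using le_iff[of "finv l'" "finv l"] finv[of l] finv[of l'] by simp

lemma finv_has_derivative: "(finv has_real_derivative 1 / f' (finv l)) (at l)"
proof -
  define x where "x = finv l"
  have x: "a < x" "x < b" "f x = l"
    using finv unfolding x_def by auto
  have "isCont finv (f x)"
    by (rule isCont_inverse_function2[of "(a + x) / 2" x "(x + b) / 2"])
      (use x in \<open>auto intro!: finv_f isCont\<close>)
  then have "DERIV finv l :> inverse (f' x)"
    using x derivative_neg[of x]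
    by (intro DERIV_inverse_function[where f = f and a = "l - 1" and b = "l + 1"])
      (auto simp: x_def finv intro: has_derivative)
  then show ?thesis
    by (simp add: x_def inverse_eq_divide)
qed

lemma finv_tendsto: "filterlim finv (at_right a) at_top"
proof (rule tendsto_imp_filterlim_at_right)
  show "eventually (\<lambda>l. a < finv l) at_top"
    using finv by simp
  show "(finv \<longlongrightarrow> a) at_top"
  proof (rule order_tendstoI)
    fix c assume "c < a"
    then show "eventually (\<lambda>l. c < finv l) at_top"
      by (intro always_eventually allI) (metis less_trans finv(1))
  next
    fix c assume "a < c"
    define x where "x = min c ((a + b) / 2)"
    have x: "a < x" "x < b" "x \<le> c"
      using \<open>a < c\<close> interval unfolding x_def by (auto simp: min_less_iff_disj)
    have "finv l < c" if "f x < l" for l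
      using le_iff[of "finv l" x] finv[of l] x that by linarith
    then show "eventually (\<lambda>l. finv l < c) at_top"
      by (auto simp: eventually_at_top_dense)
  qed
qed

end

lemma bigo_at_right_0_imp_eventually_le:
  fixes g :: "real \<Rightarrow> real"
  assumes "g \<in> O[at_right 0](\<lambda>x. x ^ k)" "filterlim u (at_right 0) F"
  obtains c where "\<And>C. c \<le> C \<Longrightarrow> eventually (\<lambda>t. \<bar>g (u t)\<bar> \<le> C * u t ^ k) F"
proof -
  obtain c where "eventually (\<lambda>x. norm (g x) \<le> c * norm (x ^ k)) (at_right 0)"
    using assms(1) by (elim landau_o.bigE) auto
  moreover have "eventually (\<lambda>x::real. 0 < x) (at_right 0)"
    by (rule eventually_at_right_less)
  ultimately have "eventually (\<lambda>x. 0 < x \<and> \<bar>g x\<bar> \<le> c * x ^ k) (at_right 0)"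
    by eventually_elim simp
  from eventually_compose_filterlim[OF this assms(2)]
  have c: "eventually (\<lambda>t. 0 < u t \<and> \<bar>g (u t)\<bar> \<le> c * u t ^ k) F" .
  show ?thesis
  proof
    fix C assume "c \<le> C"
    from c show "eventually (\<lambda>t. \<bar>g (u t)\<bar> \<le> C * u t ^ k) F"
    proof eventually_elim
      case (elim t)
      then have "c * u t ^ k \<le> C * u t ^ k"
        using \<open>c \<le> C\<close> by (intro mult_right_mono) auto
      then show ?case
        using elim by linarith
    qed
  qed
qed

definition dr_of_x :: "real \<Rightarrow> real" where
  "dr_of_x x = (338 + 1599*x + 36500*x^2 - 250000*x^3) / (26*(13 + 250*x))"
definition dr_of_x_deriv :: "real \<Rightarrow> real" where
  "dr_of_x_deriv x = ((1599 + 73000*x - 750000*x^2) * (13 + 250*x)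
     - 250 * (338 + 1599*x + 36500*x^2 - 250000*x^3)) / (26*(13 + 250*x)^2)"
definition Kr_of_x :: "real \<Rightarrow> real" where
  "Kr_of_x x = x^2 * (10049 + 36500*x - 250000*x^2) / (26*(13 + 250*x))"
definition Kr_of_x_deriv :: "real \<Rightarrow> real" where
  "Kr_of_x_deriv x = ((20098*x + 109500*x^2 - 1000000*x^3) * (13 + 250*x)
     - 250 * (10049*x^2 + 36500*x^3 - 250000*x^4)) / (26*(13 + 250*x)^2)"
definition Kl_of_x :: "real \<Rightarrow> real" where
  "Kl_of_x x = (-130637*x^2 - 949000*x^3 + 625000*x^4 + 125000000*x^5) / (26*(13 + 250*x)^2)"
definition Kl_of_x_deriv :: "real \<Rightarrow> real" where
  "Kl_of_x_deriv x = ((-261274*x - 2847000*x^2 + 2500000*x^3 + 625000000*x^4) * (13 + 250*x)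
     - 500 * (-130637*x^2 - 949000*x^3 + 625000*x^4 + 125000000*x^5)) / (26*(13 + 250*x)^3)"

definition dx_dl :: "real \<Rightarrow> real" where
  "dx_dl x = -(x^2 * dr_of_x x)"

lemma dr_of_x_has_derivative:
  assumes "13 + 250*x \<noteq> 0"
  shows "(dr_of_x has_real_derivative dr_of_x_deriv x) (at x)"
proof -
  have nonzero: "13 + 250*x \<noteq> 0" "338 + 6500*x \<noteq> 0"
    using assms by simp_all
  show ?thesis
    unfolding dr_of_x_def[abs_def] dr_of_x_deriv_def
    by (rule DERIV_quotient_eq, (rule derivative_eq_intros refl | simp add: nonzero)+,
        rule frac_eq_eq[THEN iffD2], simp_all add: nonzero)
      (simp add: algebra_simps power2_eq_square power3_eq_cube)
qed

lemma Kr_of_x_has_derivative: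
  assumes "13 + 250*x \<noteq> 0"
  shows "(Kr_of_x has_real_derivative Kr_of_x_deriv x) (at x)"
proof -
  have nonzero: "13 + 250*x \<noteq> 0" "338 + 6500*x \<noteq> 0"
    using assms by simp_all
  show ?thesis
    unfolding Kr_of_x_def[abs_def] Kr_of_x_deriv_def
    by (rule DERIV_quotient_eq, (rule derivative_eq_intros refl | simp add: nonzero)+,
        rule frac_eq_eq[THEN iffD2], simp_all add: nonzero)
      (simp add: algebra_simps power2_eq_square power3_eq_cube power4_eq_xxxx)
qed

lemma Kl_of_x_has_derivative:
  assumes "13 + 250*x \<noteq> 0"
  shows "(Kl_of_x has_real_derivative Kl_of_x_deriv x) (at x)"
proof -
  have nonzero: "13 + 250*x \<noteq> 0" "338 + 6500*x \<noteq> 0"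
    using assms by simp_all
  show ?thesis
    unfolding Kl_of_x_def[abs_def] Kl_of_x_deriv_def
    by (rule DERIV_quotient_eq, (rule derivative_eq_intros refl | simp add: nonzero)+,
        rule frac_eq_eq[THEN iffD2], simp_all add: nonzero)
      (simp add: algebra_simps power2_eq_square power3_eq_cube power4_eq_xxxx)
qed

lemma hamiltonian_identity:
  assumes "0 < x"
  shows "2*x^2 * (1 - (dr_of_x x)^2 - 2*(1/x) * (dr_of_x_deriv x * dx_dl x))
      + 4 * Kl_of_x x * Kr_of_x x + 2 * (Kr_of_x x)^2 = 200*x^4"
proof -
  define d where "d = 13 + 250*x"
  have "d \<noteq> 0" "x \<noteq> 0"
    using assms by (auto simp: d_def)
  then show ?thesis
    unfolding dr_of_x_def dr_of_x_deriv_def dx_dl_def Kl_of_x_def Kr_of_x_def d_def[symmetric]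
    by (simp add: field_simps) (unfold d_def, algebra)
qed

lemma momentum_identity:
  assumes "0 < x"
  shows "Kl_of_x x - Kr_of_x x = - x * Kr_of_x_deriv x"
proof -
  define d where "d = 13 + 250*x"
  have "d \<noteq> 0"
    using assms by (auto simp: d_def)
  then show ?thesis
    unfolding Kl_of_x_def Kr_of_x_def Kr_of_x_deriv_def d_def[symmetric]
    by (simp add: field_simps) (unfold d_def, algebra)
qed

lemma misner_sharp_identity:
  assumes "0 < x"
  shows "((1/x)/2) * (1 - (dr_of_x x)^2 + (Kr_of_x x)^2 * (1/x)^2) = 29/2 - 50*x"
proof -
  define d where "d = 13 + 250*x"
  have "d \<noteq> 0" "x \<noteq> 0"
    using assms by (auto simp: d_def)
  then show ?thesis
    unfolding dr_of_x_def Kr_of_x_def d_def[symmetric]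
    by (simp add: field_simps) (unfold d_def, algebra)
qed

lemma expansion_product_identity:
  assumes "0 < x"
  shows "((2 / (1/x)) * (dr_of_x x + Kr_of_x x * (1/x))) * ((2 / (1/x)) * (dr_of_x x - Kr_of_x x * (1/x)))
    = 4*x^2 * ((1 - 25*x) * (1 - 4*x))"
proof -
  define d where "d = 13 + 250*x"
  have "d \<noteq> 0" "x \<noteq> 0"
    using assms by (auto simp: d_def)
  then show ?thesis
    unfolding dr_of_x_def Kr_of_x_def d_def[symmetric]
    by (simp add: field_simps) (unfold d_def, algebra)
qed

lemma dr_of_x_pos:
  assumes "0 < x" "x < 26/125"
  shows "0 < dr_of_x x"
proof -
  have "338 + 1599*x + 36500*x^2 - 250000*x^3 = (26 - 125*x) * (13 + 124*x + 2000*x^2)"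
    by (simp add: algebra_simps power2_eq_square power3_eq_cube)
  moreover have "0 < (26 - 125*x) * (13 + 124*x + 2000*x^2)"
    using assms by (intro mult_pos_pos) (auto intro: add_pos_nonneg)
  ultimately show ?thesis
    unfolding dr_of_x_def using assms by (intro divide_pos_pos) auto
qed

lemma dx_dl_neg: "0 < x \<Longrightarrow> x < 26/125 \<Longrightarrow> dx_dl x < 0"
  unfolding dx_dl_def using dr_of_x_pos by simp

lemma dr_of_x_minus_1_bigo: "(\<lambda>x. dr_of_x x - 1) \<in> O[at_right 0](\<lambda>x. x)"
  unfolding dr_of_x_def by real_asymp
lemma d2r_dl2_bigo: "(\<lambda>x. dr_of_x_deriv x * dx_dl x) \<in> O[at_right 0](\<lambda>x. x^2)"
  unfolding dr_of_x_deriv_def dx_dl_def dr_of_x_def by real_asymp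
lemma Kl_of_x_bigo: "Kl_of_x \<in> O[at_right 0](\<lambda>x. x^2)"
  unfolding Kl_of_x_def by real_asymp
lemma Kr_of_x_bigo: "Kr_of_x \<in> O[at_right 0](\<lambda>x. x^2)"
  unfolding Kr_of_x_def by real_asymp
lemma dKl_dl_bigo: "(\<lambda>x. Kl_of_x_deriv x * dx_dl x) \<in> O[at_right 0](\<lambda>x. x^3)"
  unfolding Kl_of_x_deriv_def dx_dl_def dr_of_x_def by real_asymp
lemma dKr_dl_bigo: "(\<lambda>x. Kr_of_x_deriv x * dx_dl x) \<in> O[at_right 0](\<lambda>x. x^3)"
  unfolding Kr_of_x_deriv_def dx_dl_def dr_of_x_def by real_asymp

text \<open>The elementary part of an antiderivative of 1 / dx_dl; the term with the irreducible
  quadratic factor is kept as the integral of l_of_x_rem, which is bounded on [0, 1].\<close>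

definition l_of_x_elem :: "real \<Rightarrow> real" where
  "l_of_x_elem x = 1/x - 29/2 * ln x + 15625/6266 * ln (26 - 125*x)"

definition l_of_x_rem :: "real \<Rightarrow> real" where
  "l_of_x_rem y = (75232000*y + 7680384) / (3133 * (13 + 124*y + 2000*y^2))"

definition l_of_x_raw :: "real \<Rightarrow> real" where
  "l_of_x_raw x = l_of_x_elem x + integral {0..x} l_of_x_rem"

text \<open>Normalised so that the shell x = 41/200 sits at l = 200/41, where the flat interior has
  r = l = 200/41.\<close>

definition l_of_x :: "real \<Rightarrow> real" where
  "l_of_x x = 200/41 - l_of_x_raw (41/200) + l_of_x_raw x"

lemma l_of_x_rem_denominator_pos: "0 \<le> y \<Longrightarrow> 0 < 13 + 124*y + 2000*(y::real)^2"
  by (intro add_pos_nonneg) auto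

lemma l_of_x_rem_continuous: "continuous_on {0..} l_of_x_rem"
proof -
  have "3133 * (13 + 124*y + 2000*y^2) \<noteq> 0" if "y \<in> {0..}" for y :: real
    using that l_of_x_rem_denominator_pos[of y] by simp
  then show ?thesis
    unfolding l_of_x_rem_def by (intro continuous_intros) auto
qed

lemma l_of_x_rem_integral_bounds:
  assumes "0 \<le> x" "x \<le> 1"
  shows "0 \<le> integral {0..x} l_of_x_rem" "integral {0..x} l_of_x_rem \<le> 2100"
proof -
  have int: "l_of_x_rem integrable_on {0..x}"
    by (rule integrable_continuous_real, rule continuous_on_subset[OF l_of_x_rem_continuous]) auto
  have bounds: "0 \<le> l_of_x_rem y \<and> l_of_x_rem y \<le> 2100" if "0 \<le> y" "y \<le> 1" for y
    using that l_of_x_rem_denominator_pos[of y]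
    unfolding l_of_x_rem_def by (auto simp: divide_le_eq)
  show "0 \<le> integral {0..x} l_of_x_rem"
    using int bounds assms by (intro integral_nonneg) auto
  have "integral {0..x} l_of_x_rem \<le> integral {0..x} (\<lambda>_. 2100)"
    using int bounds assms by (intro integral_le) auto
  then show "integral {0..x} l_of_x_rem \<le> 2100"
    using assms by simp
qed

lemma l_of_x_partial_fractions:
  assumes "0 < x" "x < 26/125"
  shows "-1/x^2 - 29/2 * (1/x) + 15625/6266 * (-125/(26 - 125*x)) + l_of_x_rem x = 1 / dx_dl x"
proof -
  define a where "a = 26 - 125*x"
  define q where "q = 13 + 124*x + 2000*x^2"
  have nz: "a \<noteq> 0" "q \<noteq> 0" "x \<noteq> 0" "13 + 250*x \<noteq> 0"
    using assms l_of_x_rem_denominator_pos[of x] by (auto simp: a_def q_def)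
  have dr: "dr_of_x x = a * q / (26*(13 + 250*x))"
    unfolding dr_of_x_def a_def q_def by (simp add: algebra_simps power2_eq_square power3_eq_cube)
  have "1 / dx_dl x = -(26*(13 + 250*x)) / (x^2 * (a * q))"
    unfolding dx_dl_def dr using nz by (simp add: field_simps)
  moreover have "-1/x^2 - 29/2 * (1/x) + 15625/6266 * (-125/a) + (75232000*x + 7680384) / (3133*q)
      = -(26*(13 + 250*x)) / (x^2 * (a * q))"
    using nz by (simp add: field_simps) (simp add: a_def q_def algebra_simps power2_eq_square power3_eq_cube power4_eq_xxxx)
  ultimately show ?thesis
    unfolding l_of_x_rem_def a_def q_def by simp
qed

lemma l_of_x_has_derivative:
  assumes "0 < x" "x < 26/125"
  shows "(l_of_x has_real_derivative 1 / dx_dl x) (at x)"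
proof -
  have "((\<lambda>x. integral {0..x} l_of_x_rem) has_real_derivative l_of_x_rem x) (at x within {0..1})"
    using assms by (intro integral_has_real_derivative continuous_on_subset[OF l_of_x_rem_continuous]) auto
  moreover have "at x within {0..1} = at x"
    using assms by (intro at_within_interior) auto
  ultimately have integral: "((\<lambda>x. integral {0..x} l_of_x_rem) has_real_derivative l_of_x_rem x) (at x)"
    by simp
  have "((\<lambda>x. ln (26 - 125*x)) has_real_derivative 1 / (26 - 125*x) * -125) (at x)"
    using assms by (intro DERIV_chain2[where f = ln] derivative_eq_intros) auto
  moreover have "((\<lambda>x. 1/x) has_real_derivative -1/x^2) (at x)" "(ln has_real_derivative 1/x) (at x)"
    using assms by (auto intro!: derivative_eq_intros simp: power2_eq_square)
  ultimately have "(l_of_x has_real_derivative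
      0 + ((-1/x^2 - 29/2 * (1/x) + 15625/6266 * (1 / (26 - 125*x) * -125)) + l_of_x_rem x)) (at x)"
    unfolding l_of_x_def[abs_def] l_of_x_raw_def[abs_def] l_of_x_elem_def
    by (intro DERIV_add DERIV_diff DERIV_cmult DERIV_const integral)
  then show ?thesis
    using l_of_x_partial_fractions[OF assms] by simp
qed

lemma l_of_x_elem_at_top: "filterlim l_of_x_elem at_top (at_right 0)"
  unfolding l_of_x_elem_def by real_asymp

lemma l_of_x_elem_at_bot: "filterlim l_of_x_elem at_bot (at_left (26/125))"
  unfolding l_of_x_elem_def by real_asymp

lemma l_of_x_raw_bounds:
  assumes "0 < x" "x < 26/125"
  shows "l_of_x_elem x \<le> l_of_x_raw x" "l_of_x_raw x \<le> l_of_x_elem x + 2100"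
  using l_of_x_rem_integral_bounds[of x] assms unfolding l_of_x_raw_def by auto

lemma l_of_x_at_top: "filterlim l_of_x at_top (at_right 0)"
proof -
  have "eventually (\<lambda>x::real. 0 < x \<and> x < 26/125) (at_right 0)"
    by (auto simp: eventually_at_right_field intro!: exI[of _ "26/125"])
  then have "eventually (\<lambda>x. l_of_x_elem x \<le> l_of_x_raw x) (at_right 0)"
    by eventually_elim (simp add: l_of_x_raw_bounds)
  then have "filterlim l_of_x_raw at_top (at_right 0)"
    by (rule filterlim_at_top_mono[OF l_of_x_elem_at_top])
  then show ?thesis
    unfolding l_of_x_def[abs_def] by (simp add: filterlim_tendsto_add_at_top_iff[OF tendsto_const])
qed

lemma l_of_x_at_bot: "filterlim l_of_x at_bot (at_left (26/125))"
proof -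
  have "eventually (\<lambda>x. l_of_x_raw x \<le> Z) (at_left (26/125))" for Z
  proof -
    have "eventually (\<lambda>x::real. 0 < x \<and> x < 26/125) (at_left (26/125))"
      by (auto simp: eventually_at_left_field intro!: exI[of _ 0])
    moreover have "eventually (\<lambda>x. l_of_x_elem x \<le> Z - 2100) (at_left (26/125))"
      using l_of_x_elem_at_bot by (simp add: filterlim_at_bot)
    ultimately show ?thesis
      by eventually_elim (use l_of_x_raw_bounds in fastforce)
  qed
  then have "filterlim l_of_x_raw at_bot (at_left (26/125))"
    by (simp add: filterlim_at_bot)
  then show ?thesis
    unfolding l_of_x_def[abs_def] by (simp add: filterlim_tendsto_add_at_bot_iff[OF tendsto_const])
qed

interpretation l_of_x: decreasing_onto l_of_x "\<lambda>x. 1 / dx_dl x" 0 "26/125"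
  by unfold_locales (auto simp: dx_dl_neg l_of_x_has_derivative l_of_x_at_top l_of_x_at_bot)

abbreviation x_of :: "real \<Rightarrow> real" where
  "x_of \<equiv> l_of_x.finv"

lemma x_of_pos: "0 < x_of l"
  using l_of_x.finv(1) .

lemma x_of_has_derivative: "(x_of has_real_derivative dx_dl (x_of l)) (at l)"
  using l_of_x.finv_has_derivative[of l] by simp

lemma deriv_comp_x_of:
  assumes "\<And>x. 0 < x \<Longrightarrow> (g has_real_derivative g' x) (at x)"
  shows "deriv (\<lambda>l. g (x_of l)) l = g' (x_of l) * dx_dl (x_of l)"
  by (rule DERIV_imp_deriv[OF DERIV_chain2[OF assms[OF x_of_pos] x_of_has_derivative]])

lemma x_of_at_top: "filterlim x_of (at_right 0) at_top"
  by (rule l_of_x.finv_tendsto)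

lemma dx_dl_poly_quotient:
  assumes "0 < x"
  shows "dx_dl x = poly [:0, 0, 0, -338, -1599, -36500, 250000:] x / poly [:0, 338, 6500:] x"
proof -
  have "dx_dl x = -(x^2 * (338 + 1599*x + 36500*x^2 - 250000*x^3)) / (26*(13 + 250*x))"
    unfolding dx_dl_def dr_of_x_def by simp
  also have "\<dots> = poly [:0, 0, 0, -338, -1599, -36500, 250000:] x / poly [:0, 338, 6500:] x"
  proof (rule frac_eq_eq[THEN iffD2])
    show "poly [:0, 338, 6500:] x \<noteq> 0"
      using assms by (simp add: add_pos_pos)
  qed (use assms in \<open>simp_all add: algebra_simps power2_eq_square power3_eq_cube\<close>)
  finally show ?thesis .
qed

interpretation x_of: rational_flow x_of "[:0, 0, 0, -338, -1599, -36500, 250000:]" "[:0, 338, 6500:]"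
proof
  fix l
  show "(x_of has_real_derivative
      poly [:0, 0, 0, -338, -1599, -36500, 250000:] (x_of l) / poly [:0, 338, 6500:] (x_of l)) (at l)"
    using x_of_has_derivative dx_dl_poly_quotient[OF x_of_pos] by simp
  show "poly [:0, 338, 6500:] (x_of l) \<noteq> 0"
    using x_of_pos[of l] by (simp add: add_pos_pos)
qed

lemma smooth_fun_comp_x_of:
  assumes "\<And>x. 0 < x \<Longrightarrow> g x = poly p x / poly [:0, 338, 6500:] x ^ k"
  shows "smooth_fun (\<lambda>l. g (x_of l))"
  using x_of.smooth_fun_rational[of p k] assms[OF x_of_pos] by simp

definition interior_piece :: piece where
  "interior_piece = ((\<lambda>l. l), (\<lambda>_. 0), (\<lambda>_. 0), (\<lambda>_. 0))"

definition exterior_piece :: piece where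
  "exterior_piece = ((\<lambda>l. 1 / x_of l), (\<lambda>l. Kl_of_x (x_of l)), (\<lambda>l. Kr_of_x (x_of l)), (\<lambda>l. 10 * (x_of l)^2))"

lemma interior_piece_simps:
  "pr interior_piece = (\<lambda>l. l)" "pKl interior_piece = (\<lambda>_. 0)"
  "pKr interior_piece = (\<lambda>_. 0)" "pE interior_piece = (\<lambda>_. 0)"
  by (simp_all add: interior_piece_def pr_def pKl_def pKr_def pE_def)

lemma exterior_piece_simps:
  "pr exterior_piece = (\<lambda>l. 1 / x_of l)" "pKl exterior_piece = (\<lambda>l. Kl_of_x (x_of l))"
  "pKr exterior_piece = (\<lambda>l. Kr_of_x (x_of l))" "pE exterior_piece = (\<lambda>l. 10 * (x_of l)^2)"
  by (simp_all add: exterior_piece_def pr_def pKl_def pKr_def pE_def)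

lemma deriv_exterior:
  "deriv (pr exterior_piece) = (\<lambda>l. dr_of_x (x_of l))"
  "deriv (\<lambda>l. dr_of_x (x_of l)) l = dr_of_x_deriv (x_of l) * dx_dl (x_of l)"
  "deriv (pKl exterior_piece) l = Kl_of_x_deriv (x_of l) * dx_dl (x_of l)"
  "deriv (pKr exterior_piece) l = Kr_of_x_deriv (x_of l) * dx_dl (x_of l)"
proof -
  have "deriv (\<lambda>l. 1 / x_of l) l = -1 / (x_of l)^2 * dx_dl (x_of l)" for l
    by (rule deriv_comp_x_of) (auto intro!: derivative_eq_intros simp: power2_eq_square)
  also have "-1 / (x_of l)^2 * dx_dl (x_of l) = dr_of_x (x_of l)" for l
    using x_of_pos[of l] unfolding dx_dl_def by (simp add: field_simps)
  finally show "deriv (pr exterior_piece) = (\<lambda>l. dr_of_x (x_of l))"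
    unfolding exterior_piece_simps by (rule ext)
  show "deriv (\<lambda>l. dr_of_x (x_of l)) l = dr_of_x_deriv (x_of l) * dx_dl (x_of l)"
    by (rule deriv_comp_x_of) (simp add: dr_of_x_has_derivative add_pos_pos)
  show "deriv (pKl exterior_piece) l = Kl_of_x_deriv (x_of l) * dx_dl (x_of l)"
    unfolding exterior_piece_simps by (rule deriv_comp_x_of) (simp add: Kl_of_x_has_derivative add_pos_pos)
  show "deriv (pKr exterior_piece) l = Kr_of_x_deriv (x_of l) * dx_dl (x_of l)"
    unfolding exterior_piece_simps by (rule deriv_comp_x_of) (simp add: Kr_of_x_has_derivative add_pos_pos)
qed

lemma mu_exterior: "mu exterior_piece l = 0"
proof -
  define x where "x = x_of l"
  have x: "0 < x"
    using x_of_pos unfolding x_def .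
  have "mu exterior_piece l = (1 / (16 * pi)) * ((2 / (1/x)\<^sup>2) * (1 - (dr_of_x x)\<^sup>2 - 2 * (1/x) * (dr_of_x_deriv x * dx_dl x))
      + 4 * Kl_of_x x * Kr_of_x x + 2 * (Kr_of_x x)\<^sup>2) - (10 * x^2)\<^sup>2 / (8 * pi)"
    unfolding mu_def deriv_exterior unfolding exterior_piece_simps x_def by simp
  also have "(2 / (1/x)\<^sup>2) * (1 - (dr_of_x x)\<^sup>2 - 2 * (1/x) * (dr_of_x_deriv x * dx_dl x))
      + 4 * Kl_of_x x * Kr_of_x x + 2 * (Kr_of_x x)\<^sup>2 = 200 * x^4"
    using hamiltonian_identity[OF x] by (simp add: power_one_over mult.assoc)
  finally show ?thesis
    by (simp add: field_simps power2_eq_square power4_eq_xxxx)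
qed

lemma Jmom_exterior: "Jmom exterior_piece l = 0"
proof -
  define x where "x = x_of l"
  have x: "0 < x"
    using x_of_pos unfolding x_def .
  have "Jmom exterior_piece l = (1 / (8 * pi)) * (2 * (dr_of_x x / (1/x)) * (Kl_of_x x - Kr_of_x x) - 2 * (Kr_of_x_deriv x * dx_dl x))"
    unfolding Jmom_def deriv_exterior unfolding exterior_piece_simps x_def by simp
  also have "\<dots> = 0"
    unfolding momentum_identity[OF x] dx_dl_def by (simp add: algebra_simps power2_eq_square)
  finally show ?thesis .
qed

lemma ms_mass_exterior: "ms_mass exterior_piece l = 29/2 - 50 * x_of l"
  unfolding ms_mass_def deriv_exterior unfolding exterior_piece_simps
  using misner_sharp_identity[OF x_of_pos] by simp

lemma theta_product_exterior:
  "theta_plus exterior_piece l * theta_minus exterior_piece l = 4 * (x_of l)^2 * ((1 - 25 * x_of l) * (1 - 4 * x_of l))"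
  unfolding theta_plus_def theta_minus_def deriv_exterior unfolding exterior_piece_simps
  using expansion_product_identity[OF x_of_pos] by simp

lemma l_of_x_shell: "l_of_x (41/200) = 200/41"
  unfolding l_of_x_def by simp

lemma x_of_shell: "x_of (200/41) = 41/200"
proof -
  have "x_of (l_of_x (41/200)) = 41/200"
    by (rule l_of_x.finv_f) auto
  then show ?thesis
    unfolding l_of_x_shell .
qed

lemma x_of_horizon: "x_of (l_of_x (1/25)) = 1/25"
  by (rule l_of_x.finv_f) auto

lemma shell_lt_horizon: "200/41 < l_of_x (1/25)"
  using l_of_x.strict_decreasing[of "1/25" "41/200"] l_of_x_shell by simp

lemma smooth_fun_interior:
  "smooth_fun (\<lambda>l::real. l)" "smooth_fun (\<lambda>_::real. 0::real)"
proof -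
  have "poly [:0, 1:] = (\<lambda>l::real. l)" "poly 0 = (\<lambda>_::real. 0::real)"
    by auto
  then show "smooth_fun (\<lambda>l::real. l)" "smooth_fun (\<lambda>_::real. 0::real)"
    using smooth_fun_poly by metis+
qed

lemma smooth_fun_exterior:
  "smooth_fun (\<lambda>l. 1 / x_of l)" "smooth_fun (\<lambda>l. Kl_of_x (x_of l))"
  "smooth_fun (\<lambda>l. Kr_of_x (x_of l))" "smooth_fun (\<lambda>l. 10 * (x_of l)^2)"
proof -
  have nonzero: "x \<noteq> 0" "13 + 250*x \<noteq> 0" "poly [:0, 338, 6500:] x \<noteq> 0" if "0 < x" for x :: real
    using that by (auto simp: add_pos_pos)
  show "smooth_fun (\<lambda>l. 1 / x_of l)"
    by (rule smooth_fun_comp_x_of[of _ "[:338, 6500:]" 1])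
      (use nonzero in \<open>simp add: frac_eq_eq algebra_simps\<close>)
  show "smooth_fun (\<lambda>l. Kl_of_x (x_of l))"
  proof (rule smooth_fun_comp_x_of)
    fix x :: real assume "0 < x"
    show "Kl_of_x x = poly [:0, 0, 0, 0, -3396562, -24674000, 16250000, 3250000000:] x
        / poly [:0, 338, 6500:] x ^ 2"
      unfolding Kl_of_x_def
    proof (rule frac_eq_eq[THEN iffD2])
      show "26 * (13 + 250*x)^2 \<noteq> 0" "poly [:0, 338, 6500:] x ^ 2 \<noteq> 0"
        using nonzero[OF \<open>0 < x\<close>] by simp_all
    qed (simp add: algebra_simps power_numeral_reduce)
  qed
  show "smooth_fun (\<lambda>l. Kr_of_x (x_of l))"
    by (rule smooth_fun_comp_x_of[of _ "[:0, 0, 0, 10049, 36500, -250000:]" 1])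
      (use nonzero in \<open>simp add: Kr_of_x_def frac_eq_eq algebra_simps power2_eq_square power3_eq_cube\<close>)
  show "smooth_fun (\<lambda>l. 10 * (x_of l)^2)"
    by (rule smooth_fun_comp_x_of[of _ "[:0, 0, 10:]" 0]) (simp add: power2_eq_square)
qed

lemma glued_regular_up_to_shell: "regular_up_to_shell (200/41) interior_piece exterior_piece"
  unfolding regular_up_to_shell_def interior_piece_simps exterior_piece_simps
  using smooth_fun_interior smooth_fun_exterior x_of_pos by (simp add: x_of_shell)

lemma asymptotically_flat_exterior: "asymptotically_flat exterior_piece"
proof -
  obtain c1 where c1: "\<And>C. c1 \<le> C \<Longrightarrow> eventually (\<lambda>l. \<bar>dr_of_x (x_of l) - 1\<bar> \<le> C * x_of l ^ 1) at_top"
    using bigo_at_right_0_imp_eventually_le[of "\<lambda>x. dr_of_x x - 1" 1, OF _ x_of_at_top] dr_of_x_minus_1_bigo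
    by auto
  obtain c2 where c2: "\<And>C. c2 \<le> C \<Longrightarrow>
      eventually (\<lambda>l. \<bar>dr_of_x_deriv (x_of l) * dx_dl (x_of l)\<bar> \<le> C * x_of l ^ 2) at_top"
    using bigo_at_right_0_imp_eventually_le[OF d2r_dl2_bigo x_of_at_top] by auto
  obtain c3 where c3: "\<And>C. c3 \<le> C \<Longrightarrow> eventually (\<lambda>l. \<bar>Kl_of_x (x_of l)\<bar> \<le> C * x_of l ^ 2) at_top"
    using bigo_at_right_0_imp_eventually_le[OF Kl_of_x_bigo x_of_at_top] by auto
  obtain c4 where c4: "\<And>C. c4 \<le> C \<Longrightarrow> eventually (\<lambda>l. \<bar>Kr_of_x (x_of l)\<bar> \<le> C * x_of l ^ 2) at_top"
    using bigo_at_right_0_imp_eventually_le[OF Kr_of_x_bigo x_of_at_top] by auto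
  obtain c5 where c5: "\<And>C. c5 \<le> C \<Longrightarrow>
      eventually (\<lambda>l. \<bar>Kl_of_x_deriv (x_of l) * dx_dl (x_of l)\<bar> \<le> C * x_of l ^ 3) at_top"
    using bigo_at_right_0_imp_eventually_le[OF dKl_dl_bigo x_of_at_top] by auto
  obtain c6 where c6: "\<And>C. c6 \<le> C \<Longrightarrow>
      eventually (\<lambda>l. \<bar>Kr_of_x_deriv (x_of l) * dx_dl (x_of l)\<bar> \<le> C * x_of l ^ 3) at_top"
    using bigo_at_right_0_imp_eventually_le[OF dKr_dl_bigo x_of_at_top] by auto
  define C where "C = Max {c1, c2, c3, c4, c5, c6}"
  have le: "c1 \<le> C" "c2 \<le> C" "c3 \<le> C" "c4 \<le> C" "c5 \<le> C" "c6 \<le> C"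
    unfolding C_def by simp_all
  have "eventually (\<lambda>l.
      \<bar>deriv (pr exterior_piece) l - 1\<bar> \<le> C / pr exterior_piece l \<and>
      \<bar>deriv (deriv (pr exterior_piece)) l\<bar> \<le> C / (pr exterior_piece l)\<^sup>2 \<and>
      \<bar>pKl exterior_piece l\<bar> \<le> C / (pr exterior_piece l)\<^sup>2 \<and>
      \<bar>pKr exterior_piece l\<bar> \<le> C / (pr exterior_piece l)\<^sup>2 \<and>
      \<bar>deriv (pKl exterior_piece) l\<bar> \<le> C / (pr exterior_piece l)^3 \<and>
      \<bar>deriv (pKr exterior_piece) l\<bar> \<le> C / (pr exterior_piece l)^3) at_top"
    using c1[OF le(1)] c2[OF le(2)] c3[OF le(3)] c4[OF le(4)] c5[OF le(5)] c6[OF le(6)]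
    unfolding deriv_exterior unfolding exterior_piece_simps
    by eventually_elim (simp add: power_one_over)
  moreover have "filterlim (\<lambda>l. 1 / x_of l) at_top at_top"
    using filterlim_compose[OF filterlim_inverse_at_top_right x_of_at_top]
    by (simp add: inverse_eq_divide)
  ultimately show ?thesis
    unfolding asymptotically_flat_def exterior_piece_simps by blast
qed

lemma exterior_at_horizon:
  "pr exterior_piece (l_of_x (1/25)) = 25"
  "pKl exterior_piece (l_of_x (1/25)) = Kl_of_x (1/25)"
  "pKr exterior_piece (l_of_x (1/25)) = Kr_of_x (1/25)"
  unfolding exterior_piece_simps x_of_horizon by simp_all

lemma glued_not_time_symmetric: "\<not> time_symmetric (200/41) interior_piece exterior_piece"
proof -
  have "glue (200/41) pKr interior_piece exterior_piece (l_of_x (1/25)) = Kr_of_x (1/25)"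
    unfolding glue_def exterior_at_horizon using shell_lt_horizon by simp
  moreover have "Kr_of_x (1/25) \<noteq> 0"
    unfolding Kr_of_x_def by (simp add: power_numeral_reduce)
  moreover have "0 \<le> l_of_x (1/25)"
    using shell_lt_horizon by linarith
  ultimately show ?thesis
    unfolding time_symmetric_def by fastforce
qed

lemma glued_not_maximal: "\<not> maximal (200/41) interior_piece exterior_piece"
proof -
  have "glue (200/41) pKl interior_piece exterior_piece (l_of_x (1/25))
      + 2 * glue (200/41) pKr interior_piece exterior_piece (l_of_x (1/25)) = Kl_of_x (1/25) + 2 * Kr_of_x (1/25)"
    unfolding glue_def exterior_at_horizon using shell_lt_horizon by simp
  moreover have "Kl_of_x (1/25) + 2 * Kr_of_x (1/25) \<noteq> 0"
    unfolding Kr_of_x_def Kl_of_x_def by (simp add: power_numeral_reduce)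
  moreover have "0 \<le> l_of_x (1/25)"
    using shell_lt_horizon by linarith
  ultimately show ?thesis
    unfolding maximal_def by fastforce
qed

lemma glued_dominant_energy: "dominant_energy (200/41) interior_piece exterior_piece"
proof -
  have "mu interior_piece l = 0" "Jmom interior_piece l = 0" for l
    unfolding mu_def Jmom_def interior_piece_simps by simp_all
  moreover have "200/41 * \<bar>Kr_of_x (41/200) - 0\<bar> \<le> - (dr_of_x (41/200) - 1)"
    unfolding Kr_of_x_def dr_of_x_def by (simp add: power2_eq_square power3_eq_cube)
  ultimately show ?thesis
    unfolding dominant_energy_def deriv_exterior
    by (simp add: mu_exterior Jmom_exterior exterior_piece_simps interior_piece_simps x_of_shell)
qed

lemma glued_electrovac_outside: "electrovac_outside (200/41) interior_piece exterior_piece (200/41) 10"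
  unfolding electrovac_outside_def
  by (simp add: mu_exterior Jmom_exterior exterior_piece_simps power_one_over)

lemma ms_mass_exterior_tendsto: "(ms_mass exterior_piece \<longlongrightarrow> 29/2) at_top"
proof -
  have "((\<lambda>l. 29/2 - 50 * x_of l) \<longlongrightarrow> 29/2 - 50 * 0) at_top"
    using x_of_at_top by (intro tendsto_intros) (simp add: filterlim_at)
  then show ?thesis
    unfolding ms_mass_exterior[abs_def] by simp
qed

lemma glued_horizon_at: "horizon_at (200/41) interior_piece exterior_piece (l_of_x (1/25))"
proof -
  define lh where "lh = l_of_x (1/25)"
  have lh: "200/41 < lh" "x_of lh = 1/25"
    unfolding lh_def using shell_lt_horizon x_of_horizon by simp_all
  have theta: "theta_prod (200/41) interior_piece exterior_piece l = 4 * (x_of l)^2 * ((1 - 25 * x_of l) * (1 - 4 * x_of l))"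
    if "200/41 < l" for l
    unfolding theta_prod_def glue_def using that theta_product_exterior by simp
  have "theta_prod (200/41) interior_piece exterior_piece l < 0" if "200/41 < l" "l < lh" for l
  proof -
    have "1/25 < x_of l" "x_of l < 41/200"
      using l_of_x.finv_strict_decreasing[of l lh] l_of_x.finv_strict_decreasing[of "200/41" l] that lh x_of_shell
      by simp_all
    then have "(1 - 25 * x_of l) * (1 - 4 * x_of l) < 0"
      by (intro mult_neg_pos) auto
    then show ?thesis
      using theta[OF that(1)] x_of_pos[of l] by (simp add: mult_pos_neg)
  qed
  moreover have "0 \<le> theta_prod (200/41) interior_piece exterior_piece l" if "lh < l" for l
  proof -
    have "x_of l < 1/25"
      using l_of_x.finv_strict_decreasing[of lh l] that lh by simp
    then show ?thesis
      using theta[of l] that lh by simp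
  qed
  moreover have "theta_prod (200/41) interior_piece exterior_piece lh = 0"
    using theta[OF lh(1)] lh by simp
  ultimately show ?thesis
    unfolding horizon_at_def lh_def[symmetric] using lh(1)
    by (intro conjI exI[of _ "lh - 200/41"] allI impI) simp_all
qed

lemma horizon_area_radius: "pr exterior_piece (l_of_x (1/25)) = 29/2 + sqrt ((29/2)\<^sup>2 - 10\<^sup>2)"
proof -
  have "sqrt ((29/2)\<^sup>2 - 10\<^sup>2) = sqrt ((21/2)\<^sup>2)"
    by (simp add: power2_eq_square)
  then show ?thesis
    unfolding exterior_at_horizon by simp
qed

theorem theorem1:
  shows "\<exists>(ls::real) (p1::piece) (p2::piece) (l0::real) (Q::real) (M::real) (lh::real).
     regular_up_to_shell ls p1 p2 \<and>
     asymptotically_flat p2 \<and>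
     \<not> time_symmetric ls p1 p2 \<and> \<not> maximal ls p1 p2 \<and>
     dominant_energy ls p1 p2 \<and>
     electrovac_outside ls p1 p2 l0 Q \<and>
     ((\<lambda>l. ms_mass p2 l) \<longlongrightarrow> M) at_top \<and>
     M > \<bar>Q\<bar> \<and>
     l0 < lh \<and> horizon_at ls p1 p2 lh \<and>
     pr p2 lh = M + sqrt (M\<^sup>2 - Q\<^sup>2) \<and>
     2 * pr p2 l0 < \<bar>Q\<bar>"
proof (intro exI conjI)
  show "regular_up_to_shell (200/41) interior_piece exterior_piece"
    by (rule glued_regular_up_to_shell)
  show "electrovac_outside (200/41) interior_piece exterior_piece (200/41) 10"
    by (rule glued_electrovac_outside)
  show "((\<lambda>l. ms_mass exterior_piece l) \<longlongrightarrow> 29/2) at_top"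
    using ms_mass_exterior_tendsto by simp
  show "horizon_at (200/41) interior_piece exterior_piece (l_of_x (1/25))"
    by (rule glued_horizon_at)
  show "pr exterior_piece (l_of_x (1/25)) = 29/2 + sqrt ((29/2)\<^sup>2 - 10\<^sup>2)"
    by (rule horizon_area_radius)
  show "2 * pr exterior_piece (200/41) < \<bar>10 :: real\<bar>"
    by (simp add: exterior_piece_simps x_of_shell)
qed (use asymptotically_flat_exterior glued_not_time_symmetric glued_not_maximal glued_dominant_energy shell_lt_horizon in auto)

end
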